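(* Let $\Lambda$ be a left cancellative small category. The core $\Lambda_c$ is a subcategory of $\Lambda$ containing all invertible elements. Furthermore: (1) if $\alpha\beta\in\Lambda_c$ (with $s(\alpha)=r(\beta)$), then $\alpha,\beta\in\Lambda_c$; (2) if $\alpha,\beta\in\Lambda_c$ with $r(\alpha)=r(\beta)$ and $\alpha\Lambda\cap\beta\Lambda=\bigcup_{i=1}^n\alpha_i\Lambda$ for $\alpha_i\in\Lambda$, then $\{\alpha_i\}_{i=1}^n$ is exhaustive (at $r(\alpha)$); (3) if $\Lambda$ is singly aligned, $\alpha,\beta\in\Lambda_c$ with $r(\alpha)=r(\beta)$, and $\alpha\Lambda\cap\beta\Lambda=\gamma\Lambda$, then $\gamma\in\Lambda_c$.
   Context: $\Lambda$ is a small category with objects $\Lambda^0$, range $r$ and source $s$; $\alpha\Lambda=\{\alpha\beta:s(\alpha)=r(\beta)\}$; $u$ is invertible if $uv=r(u)$ for some $v$. The core is $\Lambda_c=\{\alpha\in\Lambda:\alpha\Lambda\cap\beta\Lambda\neq\emptyset\text{ for all }\beta\in r(\alpha)\Lambda\}$. For $x\in\Lambda^0$, $B\subseteq x\Lambda$ is exhaustive (at $x$) if for every $\alpha\in x\Lambda$ there is $\beta\in B$ with $\alpha\Lambda\cap\beta\Lambda\neq\emptyset$. $\Lambda$ is singly aligned if every $\alpha\Lambda\cap\beta\Lambda$ is empty or of the form $\rho\Lambda$. *)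

theory Defs
  imports Main
begin

text \<open>A small category is given by its set of morphisms L, the set of objects L0
  (identified with the identity morphisms, L0 \<subseteq> L), range r, source s and a
  composition c, where c a b (written ab in the paper) is defined when s a = r b.\<close>

definition category ::
  "'a set \<Rightarrow> 'a set \<Rightarrow> ('a \<Rightarrow> 'a) \<Rightarrow> ('a \<Rightarrow> 'a) \<Rightarrow> ('a \<Rightarrow> 'a \<Rightarrow> 'a) \<Rightarrow> bool" where
  "category L L0 r s c \<longleftrightarrow>
     L0 \<subseteq> L \<and>
     (\<forall>a\<in>L. r a \<in> L0 \<and> s a \<in> L0) \<and>
     (\<forall>x\<in>L0. r x = x \<and> s x = x) \<and>
     (\<forall>a\<in>L. \<forall>b\<in>L. s a = r b \<longrightarrow> c a b \<in> L \<and> r (c a b) = r a \<and> s (c a b) = s b) \<and>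
     (\<forall>a\<in>L. c (r a) a = a \<and> c a (s a) = a) \<and>
     (\<forall>a\<in>L. \<forall>b\<in>L. \<forall>d\<in>L. s a = r b \<longrightarrow> s b = r d \<longrightarrow> c (c a b) d = c a (c b d))"

definition left_cancellative ::
  "'a set \<Rightarrow> ('a \<Rightarrow> 'a) \<Rightarrow> ('a \<Rightarrow> 'a) \<Rightarrow> ('a \<Rightarrow> 'a \<Rightarrow> 'a) \<Rightarrow> bool" where
  "left_cancellative L r s c \<longleftrightarrow>
     (\<forall>a\<in>L. \<forall>b\<in>L. \<forall>d\<in>L. s a = r b \<longrightarrow> s a = r d \<longrightarrow> c a b = c a d \<longrightarrow> b = d)"

definition rideal :: "'a set \<Rightarrow> ('a \<Rightarrow> 'a) \<Rightarrow> ('a \<Rightarrow> 'a) \<Rightarrow> ('a \<Rightarrow> 'a \<Rightarrow> 'a) \<Rightarrow> 'a \<Rightarrow> 'a set" where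
  "rideal L r s c a = {c a b | b. b \<in> L \<and> s a = r b}"

definition invertible :: "'a set \<Rightarrow> ('a \<Rightarrow> 'a) \<Rightarrow> ('a \<Rightarrow> 'a) \<Rightarrow> ('a \<Rightarrow> 'a \<Rightarrow> 'a) \<Rightarrow> 'a \<Rightarrow> bool" where
  "invertible L r s c u \<longleftrightarrow> u \<in> L \<and> (\<exists>v\<in>L. s u = r v \<and> c u v = r u)"

definition core :: "'a set \<Rightarrow> ('a \<Rightarrow> 'a) \<Rightarrow> ('a \<Rightarrow> 'a) \<Rightarrow> ('a \<Rightarrow> 'a \<Rightarrow> 'a) \<Rightarrow> 'a set" where
  "core L r s c = {a \<in> L. \<forall>b\<in>L. r b = r a \<longrightarrow> rideal L r s c a \<inter> rideal L r s c b \<noteq> {}}"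

definition exhaustive ::
  "'a set \<Rightarrow> ('a \<Rightarrow> 'a) \<Rightarrow> ('a \<Rightarrow> 'a) \<Rightarrow> ('a \<Rightarrow> 'a \<Rightarrow> 'a) \<Rightarrow> 'a \<Rightarrow> 'a set \<Rightarrow> bool" where
  "exhaustive L r s c x B \<longleftrightarrow>
     B \<subseteq> {b \<in> L. r b = x} \<and>
     (\<forall>a\<in>L. r a = x \<longrightarrow> (\<exists>b\<in>B. rideal L r s c a \<inter> rideal L r s c b \<noteq> {}))"

definition singly_aligned ::
  "'a set \<Rightarrow> ('a \<Rightarrow> 'a) \<Rightarrow> ('a \<Rightarrow> 'a) \<Rightarrow> ('a \<Rightarrow> 'a \<Rightarrow> 'a) \<Rightarrow> bool" where
  "singly_aligned L r s c \<longleftrightarrow>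
     (\<forall>a\<in>L. \<forall>b\<in>L. rideal L r s c a \<inter> rideal L r s c b = {} \<or>
        (\<exists>p\<in>L. rideal L r s c a \<inter> rideal L r s c b = rideal L r s c p))"

definition subcategory ::
  "'a set \<Rightarrow> 'a set \<Rightarrow> ('a \<Rightarrow> 'a) \<Rightarrow> ('a \<Rightarrow> 'a) \<Rightarrow> ('a \<Rightarrow> 'a \<Rightarrow> 'a) \<Rightarrow> 'a set \<Rightarrow> bool" where
  "subcategory L L0 r s c S \<longleftrightarrow> S \<subseteq> L \<and> L0 \<subseteq> S \<and>
     (\<forall>a\<in>S. \<forall>b\<in>S. s a = r b \<longrightarrow> c a b \<in> S)"

end

theory Submission
  imports Defs
begin

text \<open>Write \<open>\<alpha>\<close> meets \<open>\<beta>\<close> for \<open>\<alpha>\<Lambda> \<inter> \<beta>\<Lambda> \<noteq> {}\<close>. Everything rests on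
  \<open>w \<in> \<alpha>\<Lambda> \<Longrightarrow> w\<Lambda> \<subseteq> \<alpha>\<Lambda>\<close>: a witness \<open>w\<close> that \<open>\<alpha>\<close> meets \<open>\<delta>\<close> can be refined by
  letting a core element with range \<open>r(w)\<close> meet \<open>w\<close>. This gives closure of the core
  under composition and under left factors, and that \<open>\<alpha>\<Lambda> \<inter> \<beta>\<Lambda>\<close> meets every \<open>\<delta>\<close>
  when \<open>\<alpha>, \<beta>\<close> are in the core, i.e. any cover of it is exhaustive. For right factors,
  left cancellation pulls a common element of \<open>\<alpha>\<beta>\<Lambda>\<close> and \<open>\<alpha>\<delta>\<Lambda>\<close> back to \<open>\<beta>\<Lambda> \<inter> \<delta>\<Lambda>\<close>.
  Finally \<open>\<gamma>\<close> is in the core iff \<open>{\<gamma>}\<close> is exhaustive, so part (3) holds without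
  single alignment.\<close>

locale small_category =
  fixes L :: "'a set" and L0 :: "'a set" and r s :: "'a \<Rightarrow> 'a" and c :: "'a \<Rightarrow> 'a \<Rightarrow> 'a"
  assumes category: "category L L0 r s c"
begin

abbreviation ideal :: "'a \<Rightarrow> 'a set" where
  "ideal a \<equiv> rideal L r s c a"

lemma objects_subset: "L0 \<subseteq> L"
  and range_in_objects: "a \<in> L \<Longrightarrow> r a \<in> L0"
  and object_range: "x \<in> L0 \<Longrightarrow> r x = x"
  and source_in_objects: "a \<in> L \<Longrightarrow> s a \<in> L0"
  and object_source: "x \<in> L0 \<Longrightarrow> s x = x"
  and comp_closed: "a \<in> L \<Longrightarrow> b \<in> L \<Longrightarrow> s a = r b \<Longrightarrow> c a b \<in> L"
  and range_comp: "a \<in> L \<Longrightarrow> b \<in> L \<Longrightarrow> s a = r b \<Longrightarrow> r (c a b) = r a"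
  and source_comp: "a \<in> L \<Longrightarrow> b \<in> L \<Longrightarrow> s a = r b \<Longrightarrow> s (c a b) = s b"
  and comp_range_left: "a \<in> L \<Longrightarrow> c (r a) a = a"
  and comp_source_right: "a \<in> L \<Longrightarrow> c a (s a) = a"
  and comp_assoc: "a \<in> L \<Longrightarrow> b \<in> L \<Longrightarrow> d \<in> L \<Longrightarrow> s a = r b \<Longrightarrow> s b = r d \<Longrightarrow>
      c (c a b) d = c a (c b d)"
  using category unfolding category_def by blast+

lemma mem_ideal_iff: "x \<in> ideal a \<longleftrightarrow> (\<exists>b\<in>L. s a = r b \<and> x = c a b)"
  unfolding rideal_def by blast

lemma comp_mem_ideal: "b \<in> L \<Longrightarrow> s a = r b \<Longrightarrow> c a b \<in> ideal a"
  unfolding mem_ideal_iff by blast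

lemma mem_ideal_range: "b \<in> L \<Longrightarrow> b \<in> ideal (r b)"
  using comp_mem_ideal[of b "r b"] range_in_objects object_source comp_range_left by simp

lemma mem_ideal_self: "a \<in> L \<Longrightarrow> a \<in> ideal a"
  using comp_mem_ideal[of "s a" a] source_in_objects objects_subset object_range
    comp_source_right by auto

lemma ideal_subset_same_range: "a \<in> L \<Longrightarrow> ideal a \<subseteq> {x \<in> L. r x = r a}"
  by (auto simp: mem_ideal_iff comp_closed range_comp)

lemma ideal_subset_if_mem:
  assumes a: "a \<in> L" and x: "x \<in> ideal a"
  shows "ideal x \<subseteq> ideal a"
proof
  obtain b where b: "b \<in> L" "s a = r b" "x = c a b"
    using x unfolding mem_ideal_iff by blast
  fix y assume "y \<in> ideal x"
  then obtain d where d: "d \<in> L" "s x = r d" "y = c x d"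
    unfolding mem_ideal_iff by blast
  have "s b = r d"
    using d(2) b source_comp a by simp
  then have "y = c a (c b d)" and "c b d \<in> L" and "r (c b d) = r b"
    using comp_assoc[OF a b(1) d(1) b(2)] comp_closed range_comp b d by simp_all
  then show "y \<in> ideal a"
    using comp_mem_ideal b(2) by metis
qed

lemma mem_core_iff:
  "a \<in> core L r s c \<longleftrightarrow> a \<in> L \<and> (\<forall>b\<in>L. r b = r a \<longrightarrow> ideal a \<inter> ideal b \<noteq> {})"
  unfolding core_def by simp

lemma core_subset: "core L r s c \<subseteq> L"
  unfolding core_def by blast

lemma core_iff_exhaustive_singleton:
  "a \<in> core L r s c \<longleftrightarrow> a \<in> L \<and> exhaustive L r s c (r a) {a}"
  unfolding mem_core_iff exhaustive_def by blast

lemma core_if_range_mem_ideal: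
  assumes a: "a \<in> L" and ra: "r a \<in> ideal a"
  shows "a \<in> core L r s c"
  unfolding mem_core_iff
proof (intro conjI a ballI impI)
  fix b assume b: "b \<in> L" "r b = r a"
  then have "b \<in> ideal (r a)"
    using mem_ideal_range[OF b(1)] by simp
  then have "b \<in> ideal a"
    using ideal_subset_if_mem[OF a ra] by blast
  moreover have "b \<in> ideal b"
    using mem_ideal_self[OF b(1)] .
  ultimately show "ideal a \<inter> ideal b \<noteq> {}" by blast
qed

lemma objects_subset_core: "L0 \<subseteq> core L r s c"
proof
  fix x assume "x \<in> L0"
  then have "x \<in> L" "r x = x"
    using objects_subset object_range by auto
  then show "x \<in> core L r s c"
    using core_if_range_mem_ideal mem_ideal_self by simp
qed

lemma invertible_in_core:
  assumes "invertible L r s c u"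
  shows "u \<in> core L r s c"
proof -
  obtain v where u: "u \<in> L" and "v \<in> L" "s u = r v" "c u v = r u"
    using assms unfolding invertible_def by blast
  then have "r u \<in> ideal u"
    using comp_mem_ideal[of v u] by simp
  then show ?thesis
    using core_if_range_mem_ideal[OF u] by simp
qed

lemma core_if_ideal_contains_core:
  assumes a: "a \<in> L" and w: "w \<in> ideal a" "w \<in> core L r s c"
  shows "a \<in> core L r s c"
  unfolding mem_core_iff
proof (intro conjI a ballI impI)
  fix d assume "d \<in> L" "r d = r a"
  moreover have "r w = r a"
    using ideal_subset_same_range[OF a] w(1) by blast
  ultimately have "ideal w \<inter> ideal d \<noteq> {}"
    using w(2) unfolding mem_core_iff by simp
  then show "ideal a \<inter> ideal d \<noteq> {}"
    using ideal_subset_if_mem[OF a w(1)] by blast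
qed

lemma left_factor_in_core:
  "a \<in> L \<Longrightarrow> b \<in> L \<Longrightarrow> s a = r b \<Longrightarrow> c a b \<in> core L r s c \<Longrightarrow> a \<in> core L r s c"
  using core_if_ideal_contains_core comp_mem_ideal by blast

lemma comp_in_core:
  assumes a: "a \<in> core L r s c" and b: "b \<in> core L r s c" and ab: "s a = r b"
  shows "c a b \<in> core L r s c"
  unfolding mem_core_iff
proof (intro conjI ballI impI)
  have aL: "a \<in> L" and bL: "b \<in> L"
    using a b core_subset by blast+
  show abL: "c a b \<in> L"
    using comp_closed[OF aL bL ab] .
  fix d assume dL: "d \<in> L" and "r d = r (c a b)"
  then have "ideal a \<inter> ideal d \<noteq> {}"
    using a range_comp[OF aL bL ab] unfolding mem_core_iff by simp
  then obtain w where "w \<in> ideal a" and wd: "w \<in> ideal d"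
    by blast
  then obtain x where x: "x \<in> L" "s a = r x" "w = c a x"
    unfolding mem_ideal_iff by blast
  with wd have axd: "c a x \<in> ideal d"
    by simp
  have "r x = r b"
    using x(2) ab by simp
  then have "ideal b \<inter> ideal x \<noteq> {}"
    using b x(1) unfolding mem_core_iff by simp
  then obtain z where zb: "z \<in> ideal b" and zx: "z \<in> ideal x"
    by blast
  obtain y where y: "y \<in> L" "s b = r y" "z = c b y"
    using zb unfolding mem_ideal_iff by blast
  obtain t where t: "t \<in> L" "s x = r t" "z = c x t"
    using zx unfolding mem_ideal_iff by blast
  \<comment> \<open>the common element is \<open>az = (ab)y = (ax)t\<close>\<close>
  have "c a z = c (c a b) y" and "s (c a b) = r y"
    using comp_assoc[OF aL bL y(1) ab y(2)] source_comp[OF aL bL ab] y by simp_all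
  then have "c a z \<in> ideal (c a b)"
    using comp_mem_ideal y(1) by metis
  moreover have "c a z = c (c a x) t" and "s (c a x) = r t"
    using comp_assoc[OF aL x(1) t(1) x(2) t(2)] source_comp[OF aL x(1) x(2)] t by simp_all
  then have "c a z \<in> ideal d"
    using comp_mem_ideal ideal_subset_if_mem[OF dL axd] t(1) by (metis subsetD)
  ultimately show "ideal (c a b) \<inter> ideal d \<noteq> {}" by blast
qed

lemma core_subcategory: "subcategory L L0 r s c (core L r s c)"
  unfolding subcategory_def
  using core_subset objects_subset_core comp_in_core by blast

lemma exhaustive_if_inter_eq_Union:
  assumes a: "a \<in> core L r s c" and b: "b \<in> core L r s c" and A: "A \<subseteq> L"
    and rab: "r a = r b" and eq: "ideal a \<inter> ideal b = (\<Union>x\<in>A. ideal x)"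
  shows "exhaustive L r s c (r a) A"
  unfolding exhaustive_def
proof (intro conjI ballI impI)
  have aL: "a \<in> L"
    using a core_subset by blast
  show "A \<subseteq> {x \<in> L. r x = r a}"
    using A mem_ideal_self eq ideal_subset_same_range[OF aL] by blast
  fix d assume dL: "d \<in> L" and "r d = r a"
  then obtain w where w: "w \<in> ideal a" "w \<in> ideal d"
    using a unfolding mem_core_iff by blast
  then have "w \<in> L" "r w = r b"
    using ideal_subset_same_range[OF aL] rab by auto
  then obtain v where "v \<in> ideal b" "v \<in> ideal w"
    using b unfolding mem_core_iff by blast
  then have "v \<in> ideal a \<inter> ideal b" and "v \<in> ideal d"
    using ideal_subset_if_mem[OF aL w(1)] ideal_subset_if_mem[OF dL w(2)] by blast+
  then show "\<exists>x\<in>A. ideal d \<inter> ideal x \<noteq> {}"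
    unfolding eq by blast
qed

lemma core_if_inter_eq_ideal:
  assumes a: "a \<in> core L r s c" and b: "b \<in> core L r s c" and g: "g \<in> L"
    and rab: "r a = r b" and eq: "ideal a \<inter> ideal b = ideal g"
  shows "g \<in> core L r s c"
proof -
  have "r g = r a"
    using eq mem_ideal_self[OF g] ideal_subset_same_range core_subset a by blast
  moreover have "exhaustive L r s c (r a) {g}"
    using exhaustive_if_inter_eq_Union a b g rab eq by simp
  ultimately show ?thesis
    using core_iff_exhaustive_singleton g by simp
qed

end

locale left_cancellative_category = small_category +
  assumes left_cancel: "left_cancellative L r s c"
begin

lemma ideals_meet_cancel:
  assumes a: "a \<in> L" and b: "b \<in> L" "s a = r b" and d: "d \<in> L" "s a = r d"
    and meet: "ideal (c a b) \<inter> ideal (c a d) \<noteq> {}"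
  shows "ideal b \<inter> ideal d \<noteq> {}"
proof -
  obtain w where wb: "w \<in> ideal (c a b)" and wd: "w \<in> ideal (c a d)"
    using meet by blast
  obtain x where x: "x \<in> L" "s (c a b) = r x" "w = c (c a b) x"
    using wb unfolding mem_ideal_iff by blast
  obtain y where y: "y \<in> L" "s (c a d) = r y" "w = c (c a d) y"
    using wd unfolding mem_ideal_iff by blast
  have bx: "s b = r x" and dy: "s d = r y"
    using x(2) y(2) source_comp a b d by simp_all
  then have "c a (c b x) = c a (c d y)"
    using x(3) y(3) comp_assoc a b d x(1) y(1) by simp
  moreover have "c b x \<in> L" "c d y \<in> L" "r (c b x) = r b" "r (c d y) = r d"
    using comp_closed range_comp b d x(1) y(1) bx dy by simp_all
  moreover have "\<forall>p\<in>L. \<forall>q\<in>L. s a = r p \<longrightarrow> s a = r q \<longrightarrow> c a p = c a q \<longrightarrow> p = q"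
    using left_cancel a unfolding left_cancellative_def by blast
  ultimately have "c b x = c d y"
    using b(2) d(2) by simp
  moreover have "c b x \<in> ideal b" "c d y \<in> ideal d"
    using comp_mem_ideal x(1) y(1) bx dy by simp_all
  ultimately show ?thesis by auto
qed

lemma right_factor_in_core:
  assumes a: "a \<in> L" and b: "b \<in> L" and ab: "s a = r b" and core: "c a b \<in> core L r s c"
  shows "b \<in> core L r s c"
  unfolding mem_core_iff
proof (intro conjI b ballI impI)
  fix d assume d: "d \<in> L" "r d = r b"
  then have "c a d \<in> L" "r (c a d) = r (c a b)"
    using comp_closed range_comp a b ab by simp_all
  then have "ideal (c a b) \<inter> ideal (c a d) \<noteq> {}"
    using core unfolding mem_core_iff by simp
  then show "ideal b \<inter> ideal d \<noteq> {}"
    using ideals_meet_cancel a b ab d by simp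
qed

end

theorem lemma4p13:
  assumes cat: "category L L0 r s c"
    and lc: "left_cancellative L r s c"
  shows "subcategory L L0 r s c (core L r s c)
    \<and> {u. invertible L r s c u} \<subseteq> core L r s c
    \<and> (\<forall>a\<in>L. \<forall>b\<in>L. s a = r b \<longrightarrow> c a b \<in> core L r s c \<longrightarrow>
          a \<in> core L r s c \<and> b \<in> core L r s c)
    \<and> (\<forall>a\<in>core L r s c. \<forall>b\<in>core L r s c. \<forall>A. finite A \<longrightarrow> A \<subseteq> L \<longrightarrow> r a = r b \<longrightarrow>
          rideal L r s c a \<inter> rideal L r s c b = (\<Union>x\<in>A. rideal L r s c x) \<longrightarrow>
          exhaustive L r s c (r a) A)
    \<and> (singly_aligned L r s c \<longrightarrow>
        (\<forall>a\<in>core L r s c. \<forall>b\<in>core L r s c. \<forall>g\<in>L. r a = r b \<longrightarrow>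
          rideal L r s c a \<inter> rideal L r s c b = rideal L r s c g \<longrightarrow>
          g \<in> core L r s c))"
proof -
  interpret left_cancellative_category L L0 r s c
    by unfold_locales (fact cat, fact lc)
  show ?thesis
  proof (intro conjI)
    show "subcategory L L0 r s c (core L r s c)"
      by (fact core_subcategory)
    show "{u. invertible L r s c u} \<subseteq> core L r s c"
      using invertible_in_core by blast
    show "\<forall>a\<in>L. \<forall>b\<in>L. s a = r b \<longrightarrow> c a b \<in> core L r s c \<longrightarrow>
        a \<in> core L r s c \<and> b \<in> core L r s c"
      using left_factor_in_core right_factor_in_core by blast
    show "\<forall>a\<in>core L r s c. \<forall>b\<in>core L r s c. \<forall>A. finite A \<longrightarrow> A \<subseteq> L \<longrightarrow> r a = r b \<longrightarrow>
        ideal a \<inter> ideal b = (\<Union>x\<in>A. ideal x) \<longrightarrow> exhaustive L r s c (r a) A"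
      using exhaustive_if_inter_eq_Union by blast
    show "singly_aligned L r s c \<longrightarrow>
        (\<forall>a\<in>core L r s c. \<forall>b\<in>core L r s c. \<forall>g\<in>L. r a = r b \<longrightarrow>
          ideal a \<inter> ideal b = ideal g \<longrightarrow> g \<in> core L r s c)"
      using core_if_inter_eq_ideal by blast
  qed
qed

end
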